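(* Let $d\ge 1$ and let $x\in\mathbb{R}^d$ be non-zero, and let $k=\lceil\|x\|_2\rceil$ be the upper integer part of $\|x\|_2$. Then $$\sup \mathbb{P}(X_1+\cdots+X_n=x)=\mathbb{P}(R_{k^2}=k),$$ where the supremum is taken over all $n\ge 1$ and all collections $X_1,\ldots,X_n$ of independent symmetric random variables in $\mathbb{R}^d$ with $\|X_i\|_2\le 1$ almost surely, and where $R_{m}$ denotes the sum of $m$ independent Rademacher random variables.
   Context: A random variable $X$ in $\mathbb{R}^d$ is symmetric if $X$ and $-X$ have the same distribution. A Rademacher random variable $\varepsilon$ satisfies $\mathbb{P}(\varepsilon=1)=\mathbb{P}(\varepsilon=-1)=\tfrac12$. *)

theory Defs
  imports "HOL-Probability.Probability"
begin

definition rademacher_sum_prob :: "nat \<Rightarrow> int \<Rightarrow> real" where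
  "rademacher_sum_prob m k =
     measure_pmf.prob (Pi_pmf {..<m} 0 (\<lambda>_. pmf_of_set {-1, 1::int}))
       {e. (\<Sum>i<m. e i) = k}"

definition sym_sum_probs :: "'a itself \<Rightarrow> (real, 'd::finite) vec \<Rightarrow> real set" where
  "sym_sum_probs _ x =
     {measure M {\<omega> \<in> space M. (\<Sum>i<n. X i \<omega>) = x} | (M :: 'a measure) n (X :: nat \<Rightarrow> 'a \<Rightarrow> (real, 'd) vec).
        prob_space M \<and> n \<ge> 1 \<and>
        prob_space.indep_vars M (\<lambda>_. borel) X {..<n} \<and>
        (\<forall>i<n. distr M borel (X i) = distr M borel (\<lambda>\<omega>. - X i \<omega>)) \<and>
        (\<forall>i<n. AE \<omega> in M. norm (X i \<omega>) \<le> 1)}"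

end

theory Submission
  imports Defs
begin

(*
  By independence and symmetry, every sign pattern s gives P(s_1 X_1 + ... + s_n X_n = x) the same
  value, so 2^n P(X_1 + ... + X_n = x) is the expected number of sign patterns s with
  s_1 X_1 + ... + s_n X_n = x. Taking the inner product with x / |x| reduces this count to a
  Littlewood-Offord problem: count the s with s_1 a_1 + ... + s_n a_n = |x|, where |a_i| <= 1.
  Identify s with the set of indices where s_i agrees with the sign of a_i. Split the subsets of
  the p indices with a_i <> 0 into symmetric chains, adding the indices in increasing order of |a_i|.
  Along such a chain the signed sum strictly increases, and at the top of the chain it is at most the
  number of steps. So a chain reaches a value t > k - 1 at most once, and only if it passes through
  level (p - k) / 2. This gives at most binomial(p, (p - k) / 2) hits. Finally,
  binomial(p, (p - k) / 2) / 2^p = P(R_p = k) is largest when p = k^2, and k^2 Rademacher steps of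
  length |x| / k in the direction of x attain this bound.
*)

section \<open>Signed sums and symmetric chains\<close>

definition signed_sum :: "('a \<Rightarrow> real) \<Rightarrow> 'a set \<Rightarrow> 'a set \<Rightarrow> real" where
  "signed_sum b A S = (\<Sum>i\<in>A. if i \<in> S then b i else - b i)"

lemma signed_sum_insert_index:
  assumes "finite A" "y \<notin> A"
  shows "signed_sum b (insert y A) S = signed_sum b A S + (if y \<in> S then b y else - b y)"
  using assms by (simp add: signed_sum_def)

lemma signed_sum_insert_outside: "y \<notin> A \<Longrightarrow> signed_sum b A (insert y S) = signed_sum b A S"
  unfolding signed_sum_def by (rule sum.cong) auto

lemma signed_sum_insert:
  assumes "finite A" "z \<in> A" "z \<notin> S"
  shows "signed_sum b A (insert z S) = signed_sum b A S + 2 * b z"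
proof -
  have "A = insert z (A - {z})" using assms(2) by blast
  then have "signed_sum b A T = signed_sum b (A - {z}) T + (if z \<in> T then b z else - b z)" for T
    using signed_sum_insert_index[of "A - {z}" z] assms(1) by (metis Diff_iff finite_Diff singletonI)
  then show ?thesis using signed_sum_insert_outside[of z "A - {z}"] assms(3) by simp
qed

lemma signed_sum_le_card:
  assumes "finite A" "\<And>i. i \<in> A \<Longrightarrow> \<bar>b i\<bar> \<le> 1"
  shows "signed_sum b A S \<le> card A"
  unfolding signed_sum_def using assms by (intro sum_bounded_above[of A _ 1, simplified]) (auto simp: abs_le_iff)

text \<open>The last condition bounds the signed sum at the top of the chain by the weight added along
  the chain. It is what forces a chain that reaches a large signed sum to be long.\<close>

definition sym_chain :: "('a \<Rightarrow> real) \<Rightarrow> 'a set \<Rightarrow> 'a set list \<Rightarrow> bool" where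
  "sym_chain b A c \<longleftrightarrow> c \<noteq> [] \<and> hd c \<subseteq> A \<and>
     successively (\<lambda>X Y. \<exists>z\<in>A - X. Y = insert z X) c \<and>
     card (hd c) + card (last c) = card A \<and>
     signed_sum b A (last c) \<le> sum b (last c - hd c)"

lemma sym_chain_step:
  assumes "sym_chain b A c" "Suc i < length c"
  obtains z where "z \<in> A - c!i" "c!Suc i = insert z (c!i)"
  using successively_nth[of "\<lambda>X Y. \<exists>z\<in>A - X. Y = insert z X" c i] assms
  unfolding sym_chain_def by blast

lemma sym_chain_nth:
  assumes c: "sym_chain b A c" and "finite A" and "i < length c"
  shows "c!i \<subseteq> A \<and> hd c \<subseteq> c!i \<and> card (c!i) = card (hd c) + i"
  using assms(3)
proof (induction i)
  case 0
  then show ?case using c by (auto simp: sym_chain_def hd_conv_nth)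
next
  case (Suc i)
  then obtain z where "z \<in> A - c!i" "c!Suc i = insert z (c!i)"
    using sym_chain_step[OF c] by blast
  moreover have "finite (c!i)" using Suc \<open>finite A\<close> finite_subset by auto
  ultimately show ?case using Suc by auto
qed

lemma sym_chain_member:
  assumes "sym_chain b A c" "finite A" "X \<in> set c"
  shows "hd c \<subseteq> X" "X \<subseteq> A"
  using sym_chain_nth[OF assms(1,2)] assms(3) by (metis in_set_conv_nth)+

lemma sym_chain_card_last:
  assumes "sym_chain b A c" "finite A"
  shows "card (last c) = card (hd c) + (length c - 1)"
proof -
  have "c \<noteq> []" using assms(1) by (simp add: sym_chain_def)
  then show ?thesis using sym_chain_nth[OF assms, of "length c - 1"] by (simp add: last_conv_nth)
qed

lemma sym_chain_length:
  assumes "sym_chain b A c" "finite A"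
  shows "length c = card A - 2 * card (hd c) + 1"
  using sym_chain_card_last[OF assms] assms(1) unfolding sym_chain_def by (cases c) auto

lemma sym_chain_last_notin_butlast:
  assumes "sym_chain b A c" "finite A"
  shows "last c \<notin> set (butlast c)"
proof
  assume "last c \<in> set (butlast c)"
  then obtain i where "i < length c - 1" "last c = c!i"
    by (auto simp: in_set_conv_nth nth_butlast)
  then show False
    using sym_chain_nth[OF assms, of i] sym_chain_card_last[OF assms] by auto
qed

lemma sym_chain_signed_sum_less:
  assumes c: "sym_chain b A c" and "finite A" and pos: "\<And>z. z \<in> A \<Longrightarrow> 0 < b z"
    and "i < j" "j < length c"
  shows "signed_sum b A (c!i) < signed_sum b A (c!j)"
proof (rule lift_Suc_mono_less_ivl[of "{..<length c - 1}"])
  fix i assume "i \<in> {..<length c - 1}"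
  then have "Suc i < length c" by simp
  then obtain z where "z \<in> A - c!i" "c!Suc i = insert z (c!i)"
    using sym_chain_step[OF c] by blast
  then show "signed_sum b A (c!i) < signed_sum b A (c!Suc i)"
    using signed_sum_insert[OF \<open>finite A\<close>] pos by simp
qed (use assms in auto)

lemma sym_chain_extend:
  assumes "finite A" "y \<notin> A" and c: "sym_chain b A c"
  shows "sym_chain b (insert y A) (c @ [insert y (last c)])"
proof -
  have ne: "c \<noteq> []" and hd: "hd c \<subseteq> A" and steps: "successively (\<lambda>X Y. \<exists>z\<in>A - X. Y = insert z X) c"
    and card: "card (hd c) + card (last c) = card A"
    and top: "signed_sum b A (last c) \<le> sum b (last c - hd c)"
    using c by (auto simp: sym_chain_def)
  have last: "last c \<subseteq> A" "finite (last c)"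
    using sym_chain_member(2)[OF c \<open>finite A\<close> last_in_set[OF ne]] \<open>finite A\<close> finite_subset by auto
  have "successively (\<lambda>X Y. \<exists>z\<in>insert y A - X. Y = insert z X) c"
    by (rule successively_mono[OF steps]) blast
  then have "successively (\<lambda>X Y. \<exists>z\<in>insert y A - X. Y = insert z X) (c @ [insert y (last c)])"
    using last \<open>y \<notin> A\<close> ne by (auto simp: successively_append_iff)
  moreover have "signed_sum b (insert y A) (insert y (last c)) \<le> sum b (insert y (last c) - hd c)"
  proof -
    have "insert y (last c) - hd c = insert y (last c - hd c)" "y \<notin> last c - hd c"
      using \<open>y \<notin> A\<close> hd last by auto
    then show ?thesis
      using top signed_sum_insert_index[OF \<open>finite A\<close> \<open>y \<notin> A\<close>]
        signed_sum_insert_outside[OF \<open>y \<notin> A\<close>] last by simp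
  qed
  moreover have "card (insert y (last c)) = card (last c) + 1"
    using last \<open>y \<notin> A\<close> by (subst card_insert_disjoint) auto
  ultimately show ?thesis
    using ne hd card \<open>finite A\<close> \<open>y \<notin> A\<close> by (auto simp: sym_chain_def)
qed

lemma signed_sum_shrink_le:
  assumes "finite A" "y \<notin> A" "z \<in> A" "z \<notin> X" "H \<subseteq> X" "X \<subseteq> A" "b y \<le> b z"
    and "signed_sum b A (insert z X) \<le> sum b (insert z X - H)"
  shows "signed_sum b (insert y A) (insert y X) \<le> sum b (insert y X - insert y H)"
proof -
  have "finite X" using rev_finite_subset[OF \<open>finite A\<close> \<open>X \<subseteq> A\<close>] .
  have "signed_sum b (insert y A) (insert y X) = signed_sum b A (insert z X) - 2 * b z + b y"
    using signed_sum_insert_index[OF \<open>finite A\<close> \<open>y \<notin> A\<close>] signed_sum_insert_outside[OF \<open>y \<notin> A\<close>]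
      signed_sum_insert[OF \<open>finite A\<close> \<open>z \<in> A\<close> \<open>z \<notin> X\<close>] by simp
  also have "\<dots> \<le> sum b (insert z X - H) - 2 * b z + b y" using assms(8) by simp
  also have "sum b (insert z X - H) = sum b (X - H) + b z"
    using \<open>z \<notin> X\<close> \<open>H \<subseteq> X\<close> \<open>finite X\<close> by (auto simp: insert_Diff_if)
  also have "X - H = insert y X - insert y H" using \<open>X \<subseteq> A\<close> \<open>y \<notin> A\<close> by auto
  finally show ?thesis using \<open>b y \<le> b z\<close> by simp
qed

lemma sym_chain_shrink:
  assumes "finite A" "y \<notin> A" and c: "sym_chain b A c" and "2 \<le> length c"
    and least: "\<And>z. z \<in> A \<Longrightarrow> b y \<le> b z"
  shows "sym_chain b (insert y A) (map (insert y) (butlast c))"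
proof -
  obtain c' X Z where c_eq: "c = c' @ [X, Z]"
    using \<open>2 \<le> length c\<close> by (metis Suc_le_length_iff append.assoc append_Cons append_Nil
      list.distinct(1) numeral_2_eq_2 rev_exhaust)
  let ?step = "\<lambda>A X Y. \<exists>z\<in>A - X. Y = insert z X"
  have steps: "successively (?step A) (c' @ [X])" and "?step A X Z"
    using c unfolding sym_chain_def c_eq by (simp_all add: successively_append_iff)
  then obtain z where z: "z \<in> A" "z \<notin> X" "Z = insert z X" by blast
  have hd_eq: "hd c = hd (c' @ [X])" unfolding c_eq by (cases c') auto
  have butlast_eq: "butlast c = c' @ [X]" and "last c = Z"
    unfolding c_eq by (simp_all add: butlast_append)
  have "X \<in> set c" unfolding c_eq by simp
  then have hd: "hd c \<subseteq> X" and X: "X \<subseteq> A"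
    using sym_chain_member[OF c \<open>finite A\<close>] by blast+
  have "finite X" using rev_finite_subset[OF \<open>finite A\<close> X] .
  let ?d = "map (insert y) (butlast c)"
  have d: "?d \<noteq> []" "hd ?d = insert y (hd c)" "last ?d = insert y X"
    unfolding butlast_eq hd_eq by (simp_all add: hd_map last_map del: map_append)
  have "successively (?step (insert y A)) ?d"
    unfolding successively_map butlast_eq using steps
    by (rule successively_mono) (use \<open>y \<notin> A\<close> in \<open>auto simp: insert_commute\<close>)
  moreover have "card (insert y (hd c)) + card (insert y X) = card (insert y A)"
  proof -
    have "card (hd c) + card Z = card A"
      using c \<open>last c = Z\<close> by (simp add: sym_chain_def)
    moreover have "y \<notin> hd c" "y \<notin> X"
      using hd X \<open>y \<notin> A\<close> by blast+
    moreover have "finite (hd c)" using rev_finite_subset[OF \<open>finite X\<close> hd] .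
    ultimately show ?thesis
      using z \<open>finite X\<close> \<open>finite A\<close> \<open>y \<notin> A\<close> by simp
  qed
  moreover have "signed_sum b (insert y A) (insert y X) \<le> sum b (insert y X - insert y (hd c))"
    using signed_sum_shrink_le[OF \<open>finite A\<close> \<open>y \<notin> A\<close> z(1,2) hd X least[OF z(1)]] c
    unfolding sym_chain_def \<open>last c = Z\<close> z(3) by blast
  ultimately show ?thesis
    using c d(1) \<open>y \<notin> A\<close> unfolding sym_chain_def d(2,3) by auto
qed

lemma in_set_butlast_if_not_last: "x \<in> set xs \<Longrightarrow> x \<noteq> last xs \<Longrightarrow> x \<in> set (butlast xs)"
  by (induction xs) auto

text \<open>The de Bruijn-Tengbergen-Kruyswijk step: a chain \<open>X\<^sub>0 \<subset> \<dots> \<subset> X\<^sub>r\<close> of subsets of \<open>A\<close>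
  yields the chains \<open>X\<^sub>0 \<subset> \<dots> \<subset> X\<^sub>r \<subset> X\<^sub>r \<union> {y}\<close> and
  \<open>X\<^sub>0 \<union> {y} \<subset> \<dots> \<subset> X\<^sub>r\<^sub>-\<^sub>1 \<union> {y}\<close> of subsets of \<open>A \<union> {y}\<close>.\<close>

definition chains_insert :: "'a \<Rightarrow> 'a set list set \<Rightarrow> 'a set list set" where
  "chains_insert y C = (\<lambda>c. c @ [insert y (last c)]) ` C \<union>
                       (\<lambda>c. map (insert y) (butlast c)) ` {c \<in> C. 2 \<le> length c}"

lemma chains_insert_covers:
  assumes "c \<in> C" "S - {y} \<in> set c"
  shows "\<exists>d\<in>chains_insert y C. S \<in> set d"
proof (cases "y \<in> S \<and> S - {y} \<noteq> last c")
  case True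
  then have "S - {y} \<in> set (butlast c)" using assms(2) by (simp add: in_set_butlast_if_not_last)
  then have "2 \<le> length c" "S \<in> set (map (insert y) (butlast c))"
    using True length_pos_if_in_set[of "S - {y}" "butlast c"] by (simp, metis imageI insert_Diff list.set_map)
  then show ?thesis using assms(1) unfolding chains_insert_def by blast
next
  case False
  then have "S \<in> set (c @ [insert y (last c)])" using assms(2) by (cases "y \<in> S") auto
  then show ?thesis using assms(1) unfolding chains_insert_def by blast
qed

lemma chains_insert_source:
  assumes "d \<in> chains_insert y C" "S \<in> set d"
    and chains: "\<And>c. c \<in> C \<Longrightarrow> c \<noteq> [] \<and> (\<forall>W\<in>set c. y \<notin> W) \<and> last c \<notin> set (butlast c)"
  obtains c where "c \<in> C" "S - {y} \<in> set c"
    "d = (if y \<in> S \<and> S - {y} \<noteq> last c then map (insert y) (butlast c) else c @ [insert y (last c)])"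
proof -
  consider (extend) c where "c \<in> C" "d = c @ [insert y (last c)]"
    | (shrink) c where "c \<in> C" "d = map (insert y) (butlast c)"
    using assms(1) unfolding chains_insert_def by blast
  then show ?thesis
  proof cases
    case extend
    then have "S \<in> set c \<or> S = insert y (last c)" using assms(2) by auto
    moreover have "c \<noteq> []" and no_y: "\<And>W. W \<in> set c \<Longrightarrow> y \<notin> W"
      using chains[OF extend(1)] by simp_all
    ultimately have "S - {y} \<in> set c \<and> \<not> (y \<in> S \<and> S - {y} \<noteq> last c)"
    proof (elim disjE)
      assume "S \<in> set c"
      then show ?thesis using no_y[of S] by simp
    next
      assume "S = insert y (last c)"
      then show ?thesis using no_y[of "last c"] \<open>c \<noteq> []\<close> by simp
    qed
    then show ?thesis using that[OF extend(1)] extend(2) by presburger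
  next
    case shrink
    then obtain W where "W \<in> set (butlast c)" "S = insert y W" using assms(2) by auto
    then have "W \<in> set c" by (simp add: in_set_butlastD)
    moreover have "S - {y} = W" using chains[OF shrink(1)] \<open>W \<in> set c\<close> \<open>S = insert y W\<close> by auto
    moreover have "W \<noteq> last c" using chains[OF shrink(1)] \<open>W \<in> set (butlast c)\<close> by auto
    ultimately show ?thesis using that[OF shrink(1)] shrink(2) \<open>S = insert y W\<close> by simp
  qed
qed

lemma chains_insert_partition:
  assumes "y \<notin> A" "S \<subseteq> insert y A"
    and part: "\<And>S. S \<subseteq> A \<Longrightarrow> \<exists>!c. c \<in> C \<and> S \<in> set c"
    and chains: "\<And>c. c \<in> C \<Longrightarrow> c \<noteq> [] \<and> set c \<subseteq> Pow A \<and> last c \<notin> set (butlast c)"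
  shows "\<exists>!d. d \<in> chains_insert y C \<and> S \<in> set d"
proof -
  have "S - {y} \<subseteq> A" using assms(2) by blast
  then obtain c where c: "c \<in> C" "S - {y} \<in> set c"
    and c_unique: "\<And>c'. c' \<in> C \<Longrightarrow> S - {y} \<in> set c' \<Longrightarrow> c' = c"
    using part[OF \<open>S - {y} \<subseteq> A\<close>] by (elim ex1E) blast
  have chains': "c \<noteq> [] \<and> (\<forall>W\<in>set c. y \<notin> W) \<and> last c \<notin> set (butlast c)" if "c \<in> C" for c
    using chains[OF that] \<open>y \<notin> A\<close> by blast
  have same_source: "d = (if y \<in> S \<and> S - {y} \<noteq> last c then map (insert y) (butlast c)
                          else c @ [insert y (last c)])"
    if "d \<in> chains_insert y C" "S \<in> set d" for d
    using chains_insert_source[OF that chains'] c_unique by metis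
  show ?thesis
    using chains_insert_covers[OF c] same_source by (intro ex_ex1I) auto
qed

lemma sym_chain_chains_insert:
  assumes "finite A" "y \<notin> A" "\<And>c. c \<in> C \<Longrightarrow> sym_chain b A c" "\<And>z. z \<in> A \<Longrightarrow> b y \<le> b z"
    and "d \<in> chains_insert y C"
  shows "sym_chain b (insert y A) d"
  using assms(5) sym_chain_extend[OF assms(1,2,3)] sym_chain_shrink[OF assms(1,2,3) _ assms(4)]
  unfolding chains_insert_def by auto

lemma sym_chain_partition_exists:
  assumes "distinct xs" "sorted (map b xs)"
  shows "\<exists>C. (\<forall>S\<subseteq>set xs. \<exists>!c. c \<in> C \<and> S \<in> set c) \<and> (\<forall>c\<in>C. sym_chain b (set xs) c)"
  using assms
proof (induction xs)
  case Nil
  have "sym_chain b {} [{}]" by (simp add: sym_chain_def signed_sum_def)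
  then show ?case by (intro exI[of _ "{[{}]}"]) auto
next
  case (Cons y ys)
  have y: "y \<notin> set ys" "\<And>z. z \<in> set ys \<Longrightarrow> b y \<le> b z"
    and "distinct ys" "sorted (map b ys)" using Cons.prems by auto
  then obtain C where part: "\<And>S. S \<subseteq> set ys \<Longrightarrow> \<exists>!c. c \<in> C \<and> S \<in> set c"
    and chains: "\<And>c. c \<in> C \<Longrightarrow> sym_chain b (set ys) c"
    using Cons.IH by (metis (no_types))
  have "c \<noteq> [] \<and> set c \<subseteq> Pow (set ys) \<and> last c \<notin> set (butlast c)" if "c \<in> C" for c
    using chains[OF that] sym_chain_member(2)[OF chains[OF that] finite_set]
      sym_chain_last_notin_butlast[OF chains[OF that] finite_set]
    unfolding sym_chain_def by blast
  then have "\<forall>S\<subseteq>set (y # ys). \<exists>!d. d \<in> chains_insert y C \<and> S \<in> set d"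
    using chains_insert_partition[OF y(1) _ part] by simp
  moreover have "\<forall>d \<in> chains_insert y C. sym_chain b (set (y # ys)) d"
    using sym_chain_chains_insert[OF finite_set y(1) chains y(2)] by simp
  ultimately show ?case by blast
qed

lemma sym_chain_signed_sum_inj:
  assumes c: "sym_chain b A c" and "finite A" and pos: "\<And>z. z \<in> A \<Longrightarrow> 0 < b z"
    and "U \<in> set c" "V \<in> set c" "signed_sum b A U = signed_sum b A V"
  shows "U = V"
proof -
  obtain i j where "i < length c" "U = c!i" "j < length c" "V = c!j"
    using assms(4,5) by (auto simp: in_set_conv_nth)
  then show ?thesis
    using sym_chain_signed_sum_less[OF c \<open>finite A\<close> pos] assms(6) by (metis less_irrefl nat_neq_iff)
qed

lemma sym_chain_hit_long:
  assumes c: "sym_chain b A c" and "finite A" and b: "\<And>z. z \<in> A \<Longrightarrow> 0 < b z \<and> b z \<le> 1"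
    and "U \<in> set c" and "real k - 1 < signed_sum b A U"
  shows "2 * card (hd c) + k \<le> card A"
proof -
  have ne: "c \<noteq> []" using c by (simp add: sym_chain_def)
  have last: "hd c \<subseteq> last c" "last c \<subseteq> A"
    using sym_chain_member[OF c \<open>finite A\<close> last_in_set[OF ne]] by auto
  obtain i where i: "i < length c" "U = c!i" using \<open>U \<in> set c\<close> by (auto simp: in_set_conv_nth)
  have pos: "\<And>z. z \<in> A \<Longrightarrow> 0 < b z" using b by blast
  have "signed_sum b A U \<le> signed_sum b A (last c)"
    using sym_chain_signed_sum_less[OF c \<open>finite A\<close> pos, of i "length c - 1"] i ne
    by (cases "i = length c - 1") (auto simp: last_conv_nth less_imp_le)
  also have "\<dots> \<le> sum b (last c - hd c)" using c by (simp add: sym_chain_def)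
  also have "\<dots> \<le> card (last c - hd c)"
    using sum_bounded_above[of "last c - hd c" b 1] b last by auto
  also have "card (last c - hd c) = card (last c) - card (hd c)"
    using last rev_finite_subset[OF \<open>finite A\<close>] by (simp add: card_Diff_subset)
  finally have "k \<le> card (last c) - card (hd c)" using \<open>real k - 1 < _\<close> by linarith
  moreover have "card (hd c) \<le> card (last c)"
    using card_mono[OF rev_finite_subset[OF \<open>finite A\<close> last(2)] last(1)] .
  moreover have "card (hd c) + card (last c) = card A" using c by (simp add: sym_chain_def)
  ultimately show ?thesis by linarith
qed

lemma sym_chain_hit_meets_level:
  assumes c: "sym_chain b A c" and "finite A" and b: "\<And>z. z \<in> A \<Longrightarrow> 0 < b z \<and> b z \<le> 1"
    and "U \<in> set c" and "real k - 1 < signed_sum b A U"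
  shows "\<exists>W\<in>set c. card W = (card A - k) div 2"
proof -
  have long: "2 * card (hd c) + k \<le> card A" by (rule sym_chain_hit_long[OF assms])
  define i where "i = (card A - k) div 2 - card (hd c)"
  have "i < length c" using long sym_chain_length[OF c \<open>finite A\<close>] unfolding i_def by linarith
  moreover have "card (c!i) = (card A - k) div 2"
    using sym_chain_nth[OF c \<open>finite A\<close> \<open>i < length c\<close>] long unfolding i_def by linarith
  ultimately show ?thesis using nth_mem by blast
qed

lemma card_le_by_chain_partition:
  fixes C :: "'x list set"
  assumes "finite L"
    and part: "\<And>W. W \<in> L \<Longrightarrow> \<exists>!c. c \<in> C \<and> W \<in> set c"
    and meets: "\<And>U. U \<in> H \<Longrightarrow> \<exists>c\<in>C. U \<in> set c \<and> (\<exists>W\<in>L. W \<in> set c)"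
    and single: "\<And>c U V. c \<in> C \<Longrightarrow> U \<in> H \<Longrightarrow> V \<in> H \<Longrightarrow> U \<in> set c \<Longrightarrow> V \<in> set c \<Longrightarrow> U = V"
  shows "card H \<le> card L"
proof -
  have "\<forall>U\<in>H. \<exists>W. W \<in> L \<and> (\<exists>c\<in>C. U \<in> set c \<and> W \<in> set c)" using meets by blast
  then obtain g where g: "\<And>U. U \<in> H \<Longrightarrow> g U \<in> L \<and> (\<exists>c\<in>C. U \<in> set c \<and> g U \<in> set c)"
    by metis
  have "inj_on g H"
  proof (rule inj_onI)
    fix U V assume "U \<in> H" "V \<in> H" "g U = g V"
    obtain c where c: "c \<in> C" "U \<in> set c" "g U \<in> set c" using g[OF \<open>U \<in> H\<close>] by blast
    obtain c' where c': "c' \<in> C" "V \<in> set c'" "g U \<in> set c'"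
      using g[OF \<open>V \<in> H\<close>] \<open>g U = g V\<close> by auto
    have "g U \<in> L" using g[OF \<open>U \<in> H\<close>] by blast
    have "c = c'" using part[OF \<open>g U \<in> L\<close>] c c' by (elim ex1E) blast
    then show "U = V" using single[OF c(1) \<open>U \<in> H\<close> \<open>V \<in> H\<close> c(2)] c'(2) by simp
  qed
  moreover have "g ` H \<subseteq> L" using g by blast
  ultimately show ?thesis using card_inj_on_le[OF _ _ \<open>finite L\<close>] by blast
qed

lemma card_signed_sum_eq_le_binomial:
  assumes "finite A" and b: "\<And>z. z \<in> A \<Longrightarrow> 0 < b z \<and> b z \<le> 1" and "real k - 1 < t"
  shows "card {U. U \<subseteq> A \<and> signed_sum b A U = t} \<le> card A choose ((card A - k) div 2)"
proof -
  obtain xs where xs: "distinct xs" "set xs = A" "sorted (map b xs)"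
    using \<open>finite A\<close> by (metis distinct_sort finite_distinct_list set_sort sorted_sort_key)
  obtain C where part: "\<And>S. S \<subseteq> A \<Longrightarrow> \<exists>!c. c \<in> C \<and> S \<in> set c"
    and chains: "\<And>c. c \<in> C \<Longrightarrow> sym_chain b A c"
    using sym_chain_partition_exists[OF xs(1,3)] unfolding xs(2) by (metis (no_types))
  have pos: "\<And>z. z \<in> A \<Longrightarrow> 0 < b z" using b by blast
  let ?H = "{U. U \<subseteq> A \<and> signed_sum b A U = t}" and ?L = "{W. W \<subseteq> A \<and> card W = (card A - k) div 2}"
  have "card ?H \<le> card ?L"
  proof (rule card_le_by_chain_partition[where C = C])
    show "finite ?L" using \<open>finite A\<close> by simp
    show "\<exists>!c. c \<in> C \<and> W \<in> set c" if "W \<in> ?L" for W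
      using that by (intro part) simp
  next
    fix U assume U: "U \<in> ?H"
    then obtain c where c: "c \<in> C" "U \<in> set c" using ex1_implies_ex[OF part[of U]] by auto
    then obtain W where "W \<in> set c" "card W = (card A - k) div 2"
      using sym_chain_hit_meets_level[OF chains \<open>finite A\<close> b] U \<open>real k - 1 < t\<close> by blast
    moreover have "W \<subseteq> A" using sym_chain_member(2)[OF chains[OF c(1)] \<open>finite A\<close> \<open>W \<in> set c\<close>] .
    ultimately show "\<exists>c\<in>C. U \<in> set c \<and> (\<exists>W\<in>?L. W \<in> set c)" using c by blast
  next
    fix c U V assume "c \<in> C" "U \<in> ?H" "U \<in> set c" "V \<in> ?H" "V \<in> set c"
    then show "U = V" using sym_chain_signed_sum_inj[OF chains \<open>finite A\<close> pos] by simp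
  qed
  then show ?thesis using n_subsets[OF \<open>finite A\<close>] by simp
qed

section \<open>Sums of Rademacher variables\<close>

lemma sum_signs_eq:
  assumes "S \<subseteq> {..<m}"
  shows "(\<Sum>i<m. if i \<in> S then -1 else 1 :: int) = int m - 2 * int (card S)"
proof -
  have "(\<Sum>i<m. if i \<in> S then -1 else 1 :: int) = (\<Sum>i<m. 1 - 2 * of_bool (i \<in> S))"
    by (rule sum.cong) auto
  also have "\<dots> = int m - 2 * int (card ({..<m} \<inter> S))"
    by (simp add: sum_subtractf sum_distrib_left[symmetric])
  finally show ?thesis using assms by (simp add: Int_absorb1)
qed

lemma rademacher_sum_prob_eq_binomial:
  "rademacher_sum_prob (k + 2 * j) (int k) = real ((k + 2 * j) choose j) / 2 ^ (k + 2 * j)"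
proof -
  define m where "m = k + 2 * j"
  define D where "D = PiE_dflt {..<m} (0::int) (\<lambda>_. {-1, 1})"
  define E where "E = {e::nat \<Rightarrow> int. (\<Sum>i<m. e i) = int k}"
  have "finite D" "D \<noteq> {}" unfolding D_def by auto
  moreover have "card D = 2 ^ m" unfolding D_def by (subst card_PiE_dflt) (auto simp: numeral_2_eq_2)
  moreover have "Pi_pmf {..<m} 0 (\<lambda>_. pmf_of_set {-1, 1::int}) = pmf_of_set D"
    unfolding D_def by (rule Pi_pmf_of_set) auto
  ultimately have prob: "rademacher_sum_prob m (int k) = real (card (D \<inter> E)) / 2 ^ m"
    unfolding rademacher_sum_prob_def E_def by (simp add: measure_pmf_of_set Int_commute)
  define signs where "signs S = (\<lambda>i. if i < m then if i \<in> S then -1 else 1 else 0 :: int)" for S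
  have sum_signs: "(\<Sum>i<m. signs S i) = int m - 2 * int (card S)" if "S \<subseteq> {..<m}" for S
    using sum_signs_eq[OF that] unfolding signs_def by simp
  have "bij_betw signs {S. S \<subseteq> {..<m} \<and> card S = j} (D \<inter> E)"
  proof (rule bij_betw_byWitness[where f' = "\<lambda>e. {i\<in>{..<m}. e i = -1}"])
    show "\<forall>S\<in>{S. S \<subseteq> {..<m} \<and> card S = j}. {i\<in>{..<m}. signs S i = -1} = S"
      unfolding signs_def by auto
    show "\<forall>e\<in>D \<inter> E. signs {i\<in>{..<m}. e i = -1} = e"
      unfolding signs_def D_def PiE_dflt_def by fastforce
    show "signs ` {S. S \<subseteq> {..<m} \<and> card S = j} \<subseteq> D \<inter> E"
    proof safe
      fix S assume "S \<subseteq> {..<m}" "j = card S"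
      then show "signs S \<in> E" using sum_signs[of S] unfolding E_def m_def by simp
    qed (auto simp: D_def PiE_dflt_def signs_def)
    show "(\<lambda>e. {i\<in>{..<m}. e i = -1}) ` (D \<inter> E) \<subseteq> {S. S \<subseteq> {..<m} \<and> card S = j}"
    proof (safe)
      fix e assume "e \<in> D" "e \<in> E"
      then have "signs {i\<in>{..<m}. e i = -1} = e"
        unfolding signs_def D_def PiE_dflt_def by fastforce
      then show "card {i\<in>{..<m}. e i = -1} = j"
        using sum_signs[of "{i\<in>{..<m}. e i = -1}"] \<open>e \<in> E\<close> unfolding E_def m_def by force
    qed
  qed
  then have "card (D \<inter> E) = m choose j"
    by (simp add: bij_betw_same_card[symmetric] n_subsets)
  then show ?thesis using prob unfolding m_def by simp
qed

lemma binomial_Suc_Suc_ratio: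
  "(Suc (Suc n) choose Suc j) * (Suc j * (Suc n - j)) = (n choose j) * (Suc (Suc n) * Suc n)"
proof -
  have a: "Suc j * (Suc (Suc n) choose Suc j) = Suc (Suc n) * (Suc n choose j)"
    by (rule Suc_times_binomial)
  have b: "(Suc n - j) * (Suc n choose j) = Suc n * (n choose j)"
    using binomial_absorb_comp[of "Suc n" j] by simp
  have "(Suc (Suc n) choose Suc j) * (Suc j * (Suc n - j))
      = (Suc j * (Suc (Suc n) choose Suc j)) * (Suc n - j)" by (simp only: ac_simps)
  also have "\<dots> = Suc (Suc n) * ((Suc n - j) * (Suc n choose j))" unfolding a by (simp only: ac_simps)
  also have "\<dots> = (n choose j) * (Suc (Suc n) * Suc n)" unfolding b by (simp only: ac_simps)
  finally show ?thesis .
qed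

lemma rademacher_sum_prob_Suc:
  "rademacher_sum_prob (k + 2 * Suc j) k * (4 * ((real j + 1) * (real k + real j + 1)))
     = rademacher_sum_prob (k + 2 * j) k * ((real k + 2 * real j + 2) * (real k + 2 * real j + 1))"
proof -
  define n where "n = k + 2 * j"
  define A where "A = real (Suc (Suc n) choose Suc j)"
  define B where "B = real (n choose j)"
  define a where "a = (real j + 1) * (real k + real j + 1)"
  define w where "w = (real k + 2 * real j + 2) * (real k + 2 * real j + 1)"
  have "real ((Suc (Suc n) choose Suc j) * (Suc j * (Suc n - j)))
      = real ((n choose j) * (Suc (Suc n) * Suc n))"
    by (simp only: binomial_Suc_Suc_ratio)
  then have ratio: "A * a = B * w"
    unfolding A_def B_def a_def w_def n_def by (simp add: Suc_diff_le algebra_simps del: binomial_Suc_Suc)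
  have "k + 2 * Suc j = Suc (Suc n)" unfolding n_def by simp
  then have "rademacher_sum_prob (k + 2 * Suc j) k = A / (4 * 2 ^ n)"
    using rademacher_sum_prob_eq_binomial[of k "Suc j"] unfolding A_def by simp
  moreover have "rademacher_sum_prob (k + 2 * j) k = B / 2 ^ n"
    using rademacher_sum_prob_eq_binomial[of k j] unfolding B_def n_def by simp
  ultimately show ?thesis
    unfolding a_def[symmetric] w_def[symmetric] using ratio by simp
qed

lemma rademacher_sum_prob_nonneg: "0 \<le> rademacher_sum_prob m k"
  by (simp add: rademacher_sum_prob_def)

lemma rademacher_sum_prob_Suc_ge:
  assumes "k + 2 * j + 2 \<le> k\<^sup>2"
  shows "rademacher_sum_prob (k + 2 * j) k \<le> rademacher_sum_prob (k + 2 * Suc j) k"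
proof -
  have "real (k + 2 * j + 2) \<le> real (k\<^sup>2)" using assms by (simp only: of_nat_le_iff)
  then have "4 * ((real j + 1) * (real k + real j + 1))
      \<le> (real k + 2 * real j + 2) * (real k + 2 * real j + 1)"
    by (simp add: algebra_simps power2_eq_square)
  then have "rademacher_sum_prob (k + 2 * j) k * (4 * ((real j + 1) * (real k + real j + 1)))
      \<le> rademacher_sum_prob (k + 2 * Suc j) k * (4 * ((real j + 1) * (real k + real j + 1)))"
    unfolding rademacher_sum_prob_Suc by (rule mult_left_mono[OF _ rademacher_sum_prob_nonneg])
  then show ?thesis by (simp add: add_pos_pos)
qed

lemma rademacher_sum_prob_Suc_le:
  assumes "k\<^sup>2 \<le> k + 2 * j + 2"
  shows "rademacher_sum_prob (k + 2 * Suc j) k \<le> rademacher_sum_prob (k + 2 * j) k"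
proof -
  have "real (k\<^sup>2) \<le> real (k + 2 * j + 2)" using assms by (simp only: of_nat_le_iff)
  then have "(real k + 2 * real j + 2) * (real k + 2 * real j + 1)
      \<le> 4 * ((real j + 1) * (real k + real j + 1))"
    by (simp add: algebra_simps power2_eq_square)
  then have "rademacher_sum_prob (k + 2 * Suc j) k * (4 * ((real j + 1) * (real k + real j + 1)))
      \<le> rademacher_sum_prob (k + 2 * j) k * (4 * ((real j + 1) * (real k + real j + 1)))"
    unfolding rademacher_sum_prob_Suc by (rule mult_left_mono[OF _ rademacher_sum_prob_nonneg])
  then show ?thesis by (simp add: add_pos_pos)
qed


lemma rademacher_sum_prob_le_peak: "rademacher_sum_prob (k + 2 * j) k \<le> rademacher_sum_prob (k\<^sup>2) k"
proof -
  define J where "J = (k\<^sup>2 - k) div 2"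
  have "k \<le> k\<^sup>2" "even (k\<^sup>2 - k)" by (simp_all add: power2_eq_square)
  then have peak: "k + 2 * J = k\<^sup>2" unfolding J_def by simp
  let ?P = "\<lambda>j. rademacher_sum_prob (k + 2 * j) k"
  consider "j \<le> J" | "J \<le> j" by linarith
  then have "?P j \<le> ?P J"
  proof cases
    case 1
    show ?thesis
    proof (rule lift_Suc_mono_le_ivl[of "{..<J}" ?P, OF _ 1])
      show "?P i \<le> ?P (Suc i)" if "i \<in> {..<J}" for i
        using that by (intro rademacher_sum_prob_Suc_ge) (auto simp: peak[symmetric])
    qed auto
  next
    case 2
    show ?thesis
    proof (rule lift_Suc_antimono_le_ivl[of "{J..}" ?P, OF _ 2])
      show "?P (Suc i) \<le> ?P i" if "i \<in> {J..}" for i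
        using that by (intro rademacher_sum_prob_Suc_le) (auto simp: peak[symmetric])
    qed auto
  qed
  then show ?thesis unfolding peak .
qed

lemma binomial_le_rademacher_peak:
  assumes "1 \<le> k" "k \<le> p"
  shows "real (p choose ((p - k) div 2)) / 2 ^ p \<le> rademacher_sum_prob (k\<^sup>2) k"
proof -
  define j where "j = (p - k) div 2"
  consider "p = k + 2 * j" | "p = k + 2 * j + 1" unfolding j_def using assms(2) by linarith
  then have "real (p choose j) / 2 ^ p \<le> rademacher_sum_prob (k + 2 * j) k
           \<or> real (p choose j) / 2 ^ p \<le> rademacher_sum_prob (k + 2 * Suc j) k"
  proof cases
    case 1
    then show ?thesis using rademacher_sum_prob_eq_binomial[of k j] by simp
  next
    case 2
    have "p choose j \<le> p choose Suc j" using 2 assms(1) by (intro binomial_mono) auto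
    then have "2 * real (p choose j) \<le> real (Suc p choose Suc j)" by simp
    then have "real (p choose j) / 2 ^ p \<le> real (Suc p choose Suc j) / 2 ^ Suc p"
      by (simp add: field_simps)
    then show ?thesis using 2 rademacher_sum_prob_eq_binomial[of k "Suc j"] by simp
  qed
  then show ?thesis unfolding j_def using rademacher_sum_prob_le_peak by (meson order_trans)
qed

section \<open>Counting sign patterns\<close>

lemma signed_sum_restrict_support:
  assumes "finite I"
  shows "signed_sum b I S = signed_sum b {i\<in>I. b i \<noteq> 0} (S \<inter> {i\<in>I. b i \<noteq> 0})"
proof -
  have "signed_sum b I S = (\<Sum>i\<in>{i\<in>I. b i \<noteq> 0}. if i \<in> S then b i else - b i)"
    unfolding signed_sum_def by (rule sum.mono_neutral_right) (use assms in auto)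
  also have "\<dots> = signed_sum b {i\<in>I. b i \<noteq> 0} (S \<inter> {i\<in>I. b i \<noteq> 0})"
    unfolding signed_sum_def by (rule sum.cong) auto
  finally show ?thesis .
qed

lemma card_signed_sum_eq_le_rademacher:
  assumes "finite I" and b: "\<And>i. i \<in> I \<Longrightarrow> 0 \<le> b i \<and> b i \<le> 1" and "real k - 1 < t" "1 \<le> k"
  shows "real (card {S. S \<subseteq> I \<and> signed_sum b I S = t}) \<le> 2 ^ card I * rademacher_sum_prob (k\<^sup>2) k"
proof -
  define P where "P = {i\<in>I. b i \<noteq> 0}"
  define Z where "Z = I - P"
  define H where "H = {U. U \<subseteq> P \<and> signed_sum b P U = t}"
  have "finite P" "finite Z" "P \<subseteq> I" using \<open>finite I\<close> unfolding P_def Z_def by auto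
  have pos: "\<And>i. i \<in> P \<Longrightarrow> 0 < b i \<and> b i \<le> 1" using b unfolding P_def by force
  have "inj_on (\<lambda>S. (S \<inter> P, S \<inter> Z)) {S. S \<subseteq> I \<and> signed_sum b I S = t}"
    unfolding Z_def by (rule inj_onI) blast
  moreover have "(\<lambda>S. (S \<inter> P, S \<inter> Z)) ` {S. S \<subseteq> I \<and> signed_sum b I S = t} \<subseteq> H \<times> Pow Z"
    using signed_sum_restrict_support[OF \<open>finite I\<close>] unfolding H_def P_def by auto
  moreover have "finite H" using \<open>finite P\<close> unfolding H_def by simp
  ultimately have "card {S. S \<subseteq> I \<and> signed_sum b I S = t} \<le> card (H \<times> Pow Z)"
    using \<open>finite Z\<close> by (intro card_inj_on_le) auto
  also have "\<dots> = card H * 2 ^ card Z"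
    using \<open>finite H\<close> \<open>finite Z\<close> by (simp add: card_cartesian_product card_Pow)
  finally have count: "card {S. S \<subseteq> I \<and> signed_sum b I S = t} \<le> card H * 2 ^ card Z" .
  have "real (card H) \<le> 2 ^ card P * rademacher_sum_prob (k\<^sup>2) k"
  proof (cases "H = {}")
    case False
    then obtain U where "U \<subseteq> P" "signed_sum b P U = t" unfolding H_def by blast
    then have "real k - 1 < card P"
      using signed_sum_le_card[OF \<open>finite P\<close>, of b U] pos \<open>real k - 1 < t\<close> by force
    then have "k \<le> card P" by linarith
    have "real (card H) \<le> real (card P choose ((card P - k) div 2))"
      unfolding H_def using card_signed_sum_eq_le_binomial[OF \<open>finite P\<close> pos \<open>real k - 1 < t\<close>] by simp
    also have "\<dots> \<le> 2 ^ card P * rademacher_sum_prob (k\<^sup>2) k"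
      using binomial_le_rademacher_peak[OF \<open>1 \<le> k\<close> \<open>k \<le> card P\<close>] by (simp add: field_simps)
    finally show ?thesis .
  qed (simp add: rademacher_sum_prob_nonneg)
  then have "real (card H * 2 ^ card Z) \<le> 2 ^ card P * rademacher_sum_prob (k\<^sup>2) k * 2 ^ card Z"
    by simp
  also have "\<dots> = 2 ^ card I * rademacher_sum_prob (k\<^sup>2) k"
    using card_Un_disjoint[OF \<open>finite P\<close> \<open>finite Z\<close>] \<open>P \<subseteq> I\<close> unfolding Z_def
    by (simp add: power_add Un_absorb1)
  finally show ?thesis using count by (meson of_nat_le_iff order_trans)
qed

lemma card_sign_vectors_sum_eq_le:
  fixes a :: "'i \<Rightarrow> real"
  assumes "finite I" "\<And>i. i \<in> I \<Longrightarrow> \<bar>a i\<bar> \<le> 1" "real k - 1 < t" "1 \<le> k"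
  shows "real (card {s \<in> I \<rightarrow>\<^sub>E {-1, 1}. (\<Sum>i\<in>I. s i * a i) = t})
           \<le> 2 ^ card I * rademacher_sum_prob (k\<^sup>2) k"
proof -
  define agrees where "agrees s = {i\<in>I. s i = 1 \<longleftrightarrow> 0 \<le> a i}" for s :: "'i \<Rightarrow> real"
  have sum_eq: "(\<Sum>i\<in>I. s i * a i) = signed_sum (\<lambda>i. \<bar>a i\<bar>) I (agrees s)"
    if "s \<in> I \<rightarrow>\<^sub>E {-1, 1}" for s
    unfolding signed_sum_def agrees_def using that
    by (intro sum.cong) (auto simp: abs_if PiE_iff)
  have "inj_on agrees (I \<rightarrow>\<^sub>E {-1, 1})"
  proof (rule inj_onI)
    fix s s' assume s: "s \<in> I \<rightarrow>\<^sub>E {-1, 1}" and s': "s' \<in> I \<rightarrow>\<^sub>E {-1, 1}"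
      and eq: "agrees s = agrees s'"
    show "s = s'"
    proof (rule PiE_ext[OF s s'])
      fix i assume "i \<in> I"
      then have "s i = 1 \<longleftrightarrow> s' i = 1"
        using eq unfolding agrees_def set_eq_iff by blast
      moreover have "s i \<in> {-1, 1}" "s' i \<in> {-1, 1}" using s s' \<open>i \<in> I\<close> by auto
      ultimately show "s i = s' i" by auto
    qed
  qed
  then have "card {s \<in> I \<rightarrow>\<^sub>E {-1, 1}. (\<Sum>i\<in>I. s i * a i) = t}
      \<le> card {S. S \<subseteq> I \<and> signed_sum (\<lambda>i. \<bar>a i\<bar>) I S = t}"
    using sum_eq \<open>finite I\<close>
    by (intro card_inj_on_le[where f = agrees]) (auto simp: agrees_def inj_on_subset)
  also have "real \<dots> \<le> 2 ^ card I * rademacher_sum_prob (k\<^sup>2) k"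
    using assms by (intro card_signed_sum_eq_le_rademacher) auto
  finally show ?thesis by simp
qed

lemma card_sign_vectors_vsum_eq_le:
  fixes v :: "'i \<Rightarrow> 'b::real_inner" and x :: 'b
  assumes "finite I" "\<And>i. i \<in> I \<Longrightarrow> norm (v i) \<le> 1" "real k - 1 < norm x" "1 \<le> k"
  shows "real (card {s \<in> I \<rightarrow>\<^sub>E {-1, 1}. (\<Sum>i\<in>I. s i *\<^sub>R v i) = x})
           \<le> 2 ^ card I * rademacher_sum_prob (k\<^sup>2) k"
proof -
  have "0 < norm x" using assms(3,4) by linarith
  define a where "a i = inner (v i) x / norm x" for i
  have "\<bar>a i\<bar> \<le> 1" if "i \<in> I" for i
  proof -
    have "\<bar>inner (v i) x\<bar> \<le> norm (v i) * norm x" by (rule Cauchy_Schwarz_ineq2)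
    also have "\<dots> \<le> norm x" using assms(2)[OF that] \<open>0 < norm x\<close> by (simp add: mult_left_le_one_le)
    finally show ?thesis using \<open>0 < norm x\<close> by (simp add: a_def abs_div)
  qed
  moreover have "(\<Sum>i\<in>I. s i * a i) = norm x" if "(\<Sum>i\<in>I. s i *\<^sub>R v i) = x" for s
  proof -
    have "(\<Sum>i\<in>I. s i * inner (v i) x) = inner (\<Sum>i\<in>I. s i *\<^sub>R v i) x"
      by (simp add: inner_sum_left)
    also have "\<dots> = norm x * norm x" using that by (simp add: dot_square_norm power2_eq_square)
    finally show ?thesis using \<open>0 < norm x\<close> by (simp add: a_def sum_divide_distrib[symmetric])
  qed
  then have "{s \<in> I \<rightarrow>\<^sub>E {-1, 1}. (\<Sum>i\<in>I. s i *\<^sub>R v i) = x}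
      \<subseteq> {s \<in> I \<rightarrow>\<^sub>E {-1, 1}. (\<Sum>i\<in>I. s i * a i) = norm x}" by blast
  then have "card {s \<in> I \<rightarrow>\<^sub>E {-1, 1}. (\<Sum>i\<in>I. s i *\<^sub>R v i) = x}
      \<le> card {s \<in> I \<rightarrow>\<^sub>E {-1, 1}. (\<Sum>i\<in>I. s i * a i) = norm x}"
    using \<open>finite I\<close> by (intro card_mono finite_subset[OF _ finite_PiE[of I "\<lambda>_. {-1, 1}"]]) auto
  ultimately show ?thesis
    using card_sign_vectors_sum_eq_le[OF \<open>finite I\<close> _ assms(3,4), of a] by force
qed

section \<open>Symmetrisation\<close>

lemma (in prob_space) sum_prob_le_of_AE_card_le:
  assumes "finite S" "\<And>s. s \<in> S \<Longrightarrow> A s \<in> events"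
    and "AE \<omega> in M. real (card {s\<in>S. \<omega> \<in> A s}) \<le> B"
  shows "(\<Sum>s\<in>S. prob (A s)) \<le> B"
proof -
  have int: "integrable M (indicator (A s) :: 'a \<Rightarrow> real)" if "s \<in> S" for s
    using assms(2)[OF that] by (simp add: emeasure_eq_measure)
  have "(\<Sum>s\<in>S. prob (A s)) = (\<Sum>s\<in>S. expectation (indicator (A s)))"
    using assms(2) by simp
  also have "\<dots> = expectation (\<lambda>\<omega>. \<Sum>s\<in>S. indicator (A s) \<omega>)"
    using int by (rule Bochner_Integration.integral_sum[symmetric])
  also have "\<dots> \<le> expectation (\<lambda>_. B)"
  proof (rule integral_mono_AE)
    show "AE \<omega> in M. (\<Sum>s\<in>S. indicator (A s) \<omega>) \<le> B"
      using assms(3) by eventually_elim (simp add: indicator_def assms(1) Int_def)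
  qed (use int in auto)
  also have "\<dots> = B" by (simp add: prob_space)
  finally show ?thesis .
qed

lemma (in prob_space) prob_sign_flip_eq:
  fixes X :: "'i \<Rightarrow> 'a \<Rightarrow> 'b::euclidean_space"
  assumes indep: "indep_vars (\<lambda>_. borel) X I" and "I \<noteq> {}"
    and sym: "\<And>i. i \<in> I \<Longrightarrow> distr M borel (X i) = distr M borel (\<lambda>\<omega>. - X i \<omega>)"
    and s: "\<And>i. i \<in> I \<Longrightarrow> s i \<in> {-1, 1}"
  shows "prob {\<omega> \<in> space M. (\<Sum>i\<in>I. s i *\<^sub>R X i \<omega>) = x} = prob {\<omega> \<in> space M. (\<Sum>i\<in>I. X i \<omega>) = x}"
proof -
  define Y where "Y i \<omega> = s i *\<^sub>R X i \<omega>" for i \<omega>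
  have rvX: "random_variable borel (X i)" if "i \<in> I" for i
    using indep that unfolding indep_vars_def by auto
  then have rvY: "random_variable borel (Y i)" if "i \<in> I" for i
    unfolding Y_def using that by simp
  have "indep_vars (\<lambda>_. borel) Y I"
    unfolding Y_def by (rule indep_vars_compose2[OF indep]) simp
  then have "distr M (\<Pi>\<^sub>M i\<in>I. borel) (\<lambda>\<omega>. \<lambda>i\<in>I. Y i \<omega>) = (\<Pi>\<^sub>M i\<in>I. distr M borel (Y i))"
    using indep_vars_iff_distr_eq_PiM'[OF \<open>I \<noteq> {}\<close> rvY] by simp
  also have "\<dots> = (\<Pi>\<^sub>M i\<in>I. distr M borel (X i))"
  proof (rule PiM_cong)
    show "distr M borel (Y i) = distr M borel (X i)" if "i \<in> I" for i
      using s[OF that] sym[OF that] unfolding Y_def by auto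
  qed simp
  also have "\<dots> = distr M (\<Pi>\<^sub>M i\<in>I. borel) (\<lambda>\<omega>. \<lambda>i\<in>I. X i \<omega>)"
    using indep_vars_iff_distr_eq_PiM'[OF \<open>I \<noteq> {}\<close> rvX] indep by simp
  finally have joint: "distr M (\<Pi>\<^sub>M i\<in>I. borel) (\<lambda>\<omega>. \<lambda>i\<in>I. Y i \<omega>)
      = distr M (\<Pi>\<^sub>M i\<in>I. borel) (\<lambda>\<omega>. \<lambda>i\<in>I. X i \<omega>)" .
  define E where "E = {y \<in> space (\<Pi>\<^sub>M i\<in>I. (borel :: 'b measure)). (\<Sum>i\<in>I. y i) = x}"
  have E: "E \<in> sets (\<Pi>\<^sub>M i\<in>I. borel)" unfolding E_def by measurable
  have prob_E: "prob {\<omega> \<in> space M. (\<Sum>i\<in>I. Z i \<omega>) = x} = measure (distr M (\<Pi>\<^sub>M i\<in>I. borel) (\<lambda>\<omega>. \<lambda>i\<in>I. Z i \<omega>)) E"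
    if "\<And>i. i \<in> I \<Longrightarrow> random_variable borel (Z i)" for Z :: "'i \<Rightarrow> 'a \<Rightarrow> 'b"
  proof -
    have "(\<lambda>\<omega>. \<lambda>i\<in>I. Z i \<omega>) \<in> measurable M (\<Pi>\<^sub>M i\<in>I. borel)"
      using that by (intro measurable_restrict) auto
    moreover have "(\<lambda>\<omega>. \<lambda>i\<in>I. Z i \<omega>) -` E \<inter> space M = {\<omega> \<in> space M. (\<Sum>i\<in>I. Z i \<omega>) = x}"
      unfolding E_def by (auto simp: space_PiM)
    ultimately show ?thesis using measure_distr[OF _ E, of "\<lambda>\<omega>. \<lambda>i\<in>I. Z i \<omega>" M] by simp
  qed
  show ?thesis
    using prob_E[OF rvY] prob_E[OF rvX] joint unfolding Y_def by simp
qed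

lemma (in prob_space) prob_sum_eq_le_rademacher:
  fixes X :: "'i \<Rightarrow> 'a \<Rightarrow> 'b::euclidean_space"
  assumes indep: "indep_vars (\<lambda>_. borel) X I" and "finite I" "I \<noteq> {}"
    and sym: "\<And>i. i \<in> I \<Longrightarrow> distr M borel (X i) = distr M borel (\<lambda>\<omega>. - X i \<omega>)"
    and bounded: "\<And>i. i \<in> I \<Longrightarrow> AE \<omega> in M. norm (X i \<omega>) \<le> 1"
    and "real k - 1 < norm x" "1 \<le> k"
  shows "prob {\<omega> \<in> space M. (\<Sum>i\<in>I. X i \<omega>) = x} \<le> rademacher_sum_prob (k\<^sup>2) k"
proof -
  define A where "A s = {\<omega> \<in> space M. (\<Sum>i\<in>I. s i *\<^sub>R X i \<omega>) = x}" for s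
  have "random_variable borel (X i)" if "i \<in> I" for i
    using indep that unfolding indep_vars_def by auto
  then have events: "A s \<in> events" for s
    unfolding A_def by measurable
  have "2 ^ card I * prob (A (\<lambda>_. 1)) = (\<Sum>s\<in>I \<rightarrow>\<^sub>E {-1, 1}. prob (A s))"
    using prob_sign_flip_eq[OF indep \<open>I \<noteq> {}\<close> sym] \<open>finite I\<close>
    by (simp add: A_def card_PiE PiE_iff)
  also have "\<dots> \<le> 2 ^ card I * rademacher_sum_prob (k\<^sup>2) k"
  proof (rule sum_prob_le_of_AE_card_le)
    have "AE \<omega> in M. \<forall>i\<in>I. norm (X i \<omega>) \<le> 1"
      using bounded \<open>finite I\<close> by (simp add: AE_finite_all)
    then show "AE \<omega> in M. real (card {s \<in> I \<rightarrow>\<^sub>E {-1, 1}. \<omega> \<in> A s})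
        \<le> 2 ^ card I * rademacher_sum_prob (k\<^sup>2) k"
    proof (rule AE_mp[OF _ AE_I2[OF impI]])
      fix \<omega> assume "\<omega> \<in> space M" "\<forall>i\<in>I. norm (X i \<omega>) \<le> 1"
      then show "real (card {s \<in> I \<rightarrow>\<^sub>E {-1, 1}. \<omega> \<in> A s}) \<le> 2 ^ card I * rademacher_sum_prob (k\<^sup>2) k"
        using card_sign_vectors_vsum_eq_le[OF \<open>finite I\<close> _ assms(6,7)] unfolding A_def by simp
    qed
  qed (use \<open>finite I\<close> events in \<open>auto intro: finite_PiE\<close>)
  finally show ?thesis unfolding A_def by simp
qed

section \<open>The extremal distribution\<close>

lemma indep_vars_Pi_pmf_borel:
  assumes "finite I"
  shows "prob_space.indep_vars (measure_pmf (Pi_pmf I d p)) (\<lambda>_. borel) (\<lambda>i \<omega>. \<omega> i) I"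
  using prob_space.indep_vars_compose2[OF measure_pmf.prob_space_axioms indep_vars_Pi_pmf[OF assms],
      of "\<lambda>_ v. v" "\<lambda>_. borel"]
  by simp

lemma distr_Pi_pmf_component_uminus:
  fixes p :: "'i \<Rightarrow> 'b::{real_normed_vector, second_countable_topology} pmf"
  assumes "finite I" "i \<in> I" "map_pmf uminus (p i) = p i"
  shows "distr (Pi_pmf I 0 p) borel (\<lambda>\<omega>. \<omega> i) = distr (Pi_pmf I 0 p) borel (\<lambda>\<omega>. - \<omega> i)"
proof (rule measure_eqI)
  fix A :: "'b set" assume "A \<in> sets (distr (Pi_pmf I 0 p) borel (\<lambda>\<omega>. \<omega> i))"
  then have A: "A \<in> sets borel" by simp
  have "map_pmf (\<lambda>\<omega>. - \<omega> i) (Pi_pmf I 0 p) = map_pmf uminus (map_pmf (\<lambda>\<omega>. \<omega> i) (Pi_pmf I 0 p))"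
    by (simp add: pmf.map_comp o_def)
  then have "map_pmf (\<lambda>\<omega>. - \<omega> i) (Pi_pmf I 0 p) = map_pmf (\<lambda>\<omega>. \<omega> i) (Pi_pmf I 0 p)"
    using assms by (simp add: Pi_pmf_component)
  then show "emeasure (distr (Pi_pmf I 0 p) borel (\<lambda>\<omega>. \<omega> i)) A
      = emeasure (distr (Pi_pmf I 0 p) borel (\<lambda>\<omega>. - \<omega> i)) A"
    using A by (simp add: emeasure_distr flip: emeasure_map_pmf)
qed simp

lemma map_pmf_uminus_pmf_of_set_pair:
  "map_pmf uminus (pmf_of_set {-u, u}) = pmf_of_set {-u, u :: 'b::ab_group_add}"
proof -
  have "map_pmf uminus (pmf_of_set {-u, u}) = pmf_of_set (uminus ` {-u, u})"
    by (rule map_pmf_of_set_inj) (auto simp: inj_on_def)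
  also have "uminus ` {-u, u} = {-u, u}" by auto
  finally show ?thesis .
qed

lemma measure_Pi_pmf_sum_eq_rademacher:
  fixes u :: "'b::real_vector"
  assumes "u \<noteq> 0"
  shows "measure_pmf.prob (Pi_pmf {..<m} 0 (\<lambda>_. pmf_of_set {-u, u})) {\<omega>. (\<Sum>i<m. \<omega> i) = of_int c *\<^sub>R u}
           = rademacher_sum_prob m c"
proof -
  define f where "f e = of_int e *\<^sub>R u" for e :: int
  have "map_pmf f (pmf_of_set {-1, 1}) = pmf_of_set {-u, u}"
    using map_pmf_of_set_inj[of f "{-1, 1}"] assms by (simp add: f_def inj_on_def)
  then have "Pi_pmf {..<m} 0 (\<lambda>_. pmf_of_set {-u, u})
      = map_pmf (\<lambda>h. f \<circ> h) (Pi_pmf {..<m} 0 (\<lambda>_. pmf_of_set {-1, 1::int}))"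
    using Pi_pmf_map[of "{..<m}" f 0 0 "\<lambda>_. pmf_of_set {-1, 1::int}"] by (simp add: f_def)
  moreover have "(\<lambda>h. f \<circ> h) -` {\<omega>. (\<Sum>i<m. \<omega> i) = of_int c *\<^sub>R u} = {e. (\<Sum>i<m. e i) = c}"
    using assms by (auto simp: f_def scaleR_sum_left[symmetric] of_int_sum[symmetric] simp del: of_int_sum)
  ultimately show ?thesis by (simp add: rademacher_sum_prob_def)
qed

lemma rademacher_sum_prob_mem_sym_sum_probs:
  fixes x :: "real^'d"
  assumes "x \<noteq> 0" "norm x \<le> real k" "1 \<le> m"
  shows "rademacher_sum_prob m (int k) \<in> sym_sum_probs TYPE(nat \<Rightarrow> real^'d) x"
proof -
  have "0 < norm x" using assms(1) by simp
  then have "0 < real k" using assms(2) by linarith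
  define u where "u = x /\<^sub>R real k"
  have "u \<noteq> 0" "norm u \<le> 1" "x = of_int (int k) *\<^sub>R u"
    using assms \<open>0 < real k\<close> by (auto simp: u_def field_simps)
  define P where "P = Pi_pmf {..<m} 0 (\<lambda>_. pmf_of_set {-u, u})"
  have "prob_space.indep_vars (measure_pmf P) (\<lambda>_. borel) (\<lambda>i \<omega>. \<omega> i) {..<m}"
    unfolding P_def by (rule indep_vars_Pi_pmf_borel) simp
  moreover have "\<forall>i<m. distr P borel (\<lambda>\<omega>. \<omega> i) = distr P borel (\<lambda>\<omega>. - \<omega> i)"
    unfolding P_def by (auto intro: distr_Pi_pmf_component_uminus map_pmf_uminus_pmf_of_set_pair)
  moreover have "\<forall>i<m. AE \<omega> in P. norm (\<omega> i) \<le> 1"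
    using \<open>norm u \<le> 1\<close> by (auto simp: P_def AE_measure_pmf_iff set_Pi_pmf PiE_dflt_def)
  moreover have "rademacher_sum_prob m (int k) = measure P {\<omega> \<in> space P. (\<Sum>i<m. \<omega> i) = x}"
    using measure_Pi_pmf_sum_eq_rademacher[OF \<open>u \<noteq> 0\<close>, of m "int k"] \<open>x = _\<close> by (simp add: P_def)
  ultimately show ?thesis
    unfolding sym_sum_probs_def mem_Collect_eq using measure_pmf.prob_space_axioms \<open>1 \<le> m\<close>
    by (intro exI[of _ "measure_pmf P"] exI[of _ m] exI[of _ "\<lambda>i \<omega>. \<omega> i"]) simp
qed

lemma sym_sum_probs_le_rademacher:
  fixes x :: "real^'d"
  assumes "p \<in> sym_sum_probs TYPE('a) x" "real k - 1 < norm x" "1 \<le> k"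
  shows "p \<le> rademacher_sum_prob (k\<^sup>2) k"
proof -
  obtain M :: "'a measure" and n and X :: "nat \<Rightarrow> 'a \<Rightarrow> real^'d"
    where p: "p = measure M {\<omega> \<in> space M. (\<Sum>i<n. X i \<omega>) = x}" and "prob_space M" "1 \<le> n"
      and "prob_space.indep_vars M (\<lambda>_. borel) X {..<n}"
      and "\<forall>i<n. distr M borel (X i) = distr M borel (\<lambda>\<omega>. - X i \<omega>)"
      and "\<forall>i<n. AE \<omega> in M. norm (X i \<omega>) \<le> 1"
    using assms(1) unfolding sym_sum_probs_def by blast
  then show ?thesis
    unfolding p using prob_space.prob_sum_eq_le_rademacher[of M X "{..<n}" k x] assms(2,3)
    by (auto simp: lessThan_empty_iff)
qed

theorem theorem3:
  fixes x :: "real^'d"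
  assumes "x \<noteq> 0"
  defines "k \<equiv> \<lceil>norm x\<rceil>"
  shows "(\<forall>p \<in> sym_sum_probs TYPE('a) x. p \<le> rademacher_sum_prob (nat (k^2)) k)
       \<and> Sup (sym_sum_probs TYPE(nat \<Rightarrow> real^'d) x) = rademacher_sum_prob (nat (k^2)) k"
proof -
  define n where "n = nat k"
  have "0 < norm x" using assms(1) by simp
  then have "k = int n" "1 \<le> n" "real n - 1 < norm x" "norm x \<le> real n"
    unfolding n_def k_def by linarith+
  then have target: "rademacher_sum_prob (nat (k^2)) k = rademacher_sum_prob (n\<^sup>2) n"
    by (simp add: nat_power_eq)
  have "rademacher_sum_prob (n\<^sup>2) n \<in> sym_sum_probs TYPE(nat \<Rightarrow> real^'d) x"
    using rademacher_sum_prob_mem_sym_sum_probs[OF assms(1) \<open>norm x \<le> real n\<close>] \<open>1 \<le> n\<close> by simp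
  then have "Sup (sym_sum_probs TYPE(nat \<Rightarrow> real^'d) x) = rademacher_sum_prob (n\<^sup>2) n"
    using sym_sum_probs_le_rademacher \<open>real n - 1 < norm x\<close> \<open>1 \<le> n\<close> by (intro cSup_eq_maximum) auto
  then show ?thesis
    using sym_sum_probs_le_rademacher \<open>real n - 1 < norm x\<close> \<open>1 \<le> n\<close> unfolding target by auto
qed

end
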